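(* Let $\{\hat f_n\}_{n\in\mathbb N}\subset L_0(\hat\nabla,\hat\mu)$, and for each $n$ let $\omega\mapsto f_n(\omega)\in L_0(\nabla_\omega,\mu_\omega)$ be the measurable section representing $\hat f_n$. Then $\sup_{n}\hat f_n$ exists in $L_0(\hat\nabla,\hat\mu)$ if and only if $\sup_n f_n(\omega)$ exists in $L_0(\nabla_\omega,\mu_\omega)$ for $\lambda$-almost every $\omega\in\Omega$. In that case $\big(\sup_n \hat f_n\big)(\omega)=\sup_n f_n(\omega)$ for $\lambda$-almost every $\omega\in\Omega$.
   Context: $(\Omega,\Sigma,\lambda)$ is a measure space with finite measure $\lambda$; $L_0(\Omega)$ is the algebra of (classes of a.e. equal) measurable real functions on $\Omega$. For each $\omega\in\Omega$, $\nabla_\omega$ is a complete Boolean algebra carrying a strictly positive finite real-valued measure $\mu_\omega$, with metric $\rho_\omega(e,g)=\mu_\omega(e\,\Delta\, g)$. The assignment $\omega\mapsto\nabla_\omega$ together with a set $L$ of sections forms a measurable bundle of Boolean algebras over $\Omega$ (closed under complements and finite suprema, with measurable distance functions and pointwise dense values). $\hat\nabla$ denotes the complete Boolean algebra of classes (modulo a.e. equality) of measurable sections $\omega\mapsto e(\omega)\in\nabla_\omega$, and $\hat\mu:\hat\nabla\to L_0(\Omega)$ is the strictly positive $L_0(\Omega)$-valued measure given by $\hat\mu(\hat e)=$ the class of $\omega\mapsto\mu_\omega(e(\omega))$. $L_0(\hat\nabla,\hat\mu)$ is the order complete vector lattice $C_\infty(Q(\hat\nabla))$ ($Q(\hat\nabla)$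 the Stone space of $\hat\nabla$), and $L_0(\nabla_\omega,\mu_\omega)$ is the usual space of measurable functions (mod null sets) over $(\nabla_\omega,\mu_\omega)$ with metric $\rho_\omega(a,b)=\int\frac{|a-b|}{1+|a-b|}d\mu_\omega$. It is known that $L_0(\hat\nabla,\hat\mu)$ is identified with the space of classes (mod a.e. equality) of measurable sections $\omega\mapsto f(\omega)\in L_0(\nabla_\omega,\mu_\omega)$ (sections that are a.e. limits in $\rho_\omega$ of step sections $\sum_i\chi_{A_i}(\omega)u_i(\omega)$, $A_i\in\Sigma$ disjoint, $u_i$ finite real combinations of measurable sections of $\nabla$); under this identification, $\hat f$ corresponds to a section $\omega\mapsto f(\omega)$, and $\hat f\le\hat g$ iff $f(\omega)\le g(\omega)$ for a.e. $\omega$. *)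

theory Defs
  imports "HOL-Analysis.Analysis"
begin

text \<open>Fibre Boolean algebras: the measure algebra of a finite measure space M w
  (measurable sets modulo null sets); L_0 of the fibre = Borel functions on M w modulo a.e.\<close>

definition symdiff :: "'a set \<Rightarrow> 'a set \<Rightarrow> 'a set" where
  "symdiff A B = (A - B) \<union> (B - A)"

definition measurable_bundle ::
  "'w measure \<Rightarrow> ('w \<Rightarrow> 'x measure) \<Rightarrow> ('w \<Rightarrow> 'x set) set \<Rightarrow> bool" where
  "measurable_bundle Om M L \<longleftrightarrow>
     finite_measure Om \<and>
     (\<forall>w. finite_measure (M w)) \<and>
     (\<forall>u\<in>L. \<forall>w. u w \<in> sets (M w)) \<and>
     (\<forall>u\<in>L. \<exists>v\<in>L. \<forall>w. measure (M w) (symdiff (v w) (space (M w) - u w)) = 0) \<and>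
     (\<forall>u\<in>L. \<forall>v\<in>L. \<exists>z\<in>L. \<forall>w. measure (M w) (symdiff (z w) (u w \<union> v w)) = 0) \<and>
     (\<forall>u\<in>L. \<forall>v\<in>L. (\<lambda>w. measure (M w) (symdiff (u w) (v w))) \<in> borel_measurable Om) \<and>
     (\<forall>w. \<forall>A\<in>sets (M w). \<forall>e>0. \<exists>u\<in>L. measure (M w) (symdiff (u w) A) < e)"

definition lin_comb_L :: "('w \<Rightarrow> 'x set) set \<Rightarrow> ('w \<Rightarrow> 'x \<Rightarrow> real) \<Rightarrow> bool" where
  "lin_comb_L L v \<longleftrightarrow> (\<exists>(J::nat set) c e. finite J \<and> (\<forall>j\<in>J. e j \<in> L) \<and>
      v = (\<lambda>w x. \<Sum>j\<in>J. c j * indicator (e j w) x))"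

definition step_section ::
  "'w measure \<Rightarrow> ('w \<Rightarrow> 'x set) set \<Rightarrow> ('w \<Rightarrow> 'x \<Rightarrow> real) \<Rightarrow> bool" where
  "step_section Om L s \<longleftrightarrow> (\<exists>(I::nat set) A u. finite I \<and> (\<forall>i\<in>I. A i \<in> sets Om) \<and>
      disjoint_family_on A I \<and> (\<forall>i\<in>I. lin_comb_L L (u i)) \<and>
      s = (\<lambda>w x. \<Sum>i\<in>I. indicator (A i) w * u i w x))"

definition rho :: "'x measure \<Rightarrow> ('x \<Rightarrow> real) \<Rightarrow> ('x \<Rightarrow> real) \<Rightarrow> real" where
  "rho N a b = (\<integral>x. \<bar>a x - b x\<bar> / (1 + \<bar>a x - b x\<bar>) \<partial>N)"

definition measurable_section ::
  "'w measure \<Rightarrow> ('w \<Rightarrow> 'x measure) \<Rightarrow> ('w \<Rightarrow> 'x set) set \<Rightarrow> ('w \<Rightarrow> 'x \<Rightarrow> real) \<Rightarrow> bool" where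
  "measurable_section Om M L f \<longleftrightarrow> (\<forall>w. f w \<in> borel_measurable (M w)) \<and>
     (\<exists>s. (\<forall>k. step_section Om L (s k)) \<and>
          (AE w in Om. (\<lambda>k. rho (M w) (s k w) (f w)) \<longlonglongrightarrow> 0))"

definition le_fib :: "'x measure \<Rightarrow> ('x \<Rightarrow> real) \<Rightarrow> ('x \<Rightarrow> real) \<Rightarrow> bool" where
  "le_fib N a b \<longleftrightarrow> (AE x in N. a x \<le> b x)"

text \<open>Order of L_0(hat nabla, hat mu), identified with classes of measurable sections.\<close>
definition le_sec :: "'w measure \<Rightarrow> ('w \<Rightarrow> 'x measure) \<Rightarrow> ('w \<Rightarrow> 'x \<Rightarrow> real) \<Rightarrow> ('w \<Rightarrow> 'x \<Rightarrow> real) \<Rightarrow> bool" where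
  "le_sec Om M f g \<longleftrightarrow> (AE w in Om. le_fib (M w) (f w) (g w))"

definition is_lub_in :: "('a \<Rightarrow> 'a \<Rightarrow> bool) \<Rightarrow> 'a set \<Rightarrow> (nat \<Rightarrow> 'a) \<Rightarrow> 'a \<Rightarrow> bool" where
  "is_lub_in le S F g \<longleftrightarrow> g \<in> S \<and> (\<forall>n. le (F n) g) \<and>
     (\<forall>h\<in>S. (\<forall>n. le (F n) h) \<longrightarrow> le g h)"

end

(* The supremum of countably many elements of a fibre L_0(nabla_w, mu_w) exists iff they are
   bounded above almost everywhere, and it is then their pointwise supremum. An upper bound in
   L_0(hat nabla, hat mu) bounds almost every fibre. Conversely, if almost every fibre is bounded,
   the pointwise supremum g of the sections f_n is again a measurable section, hence the least upper
   bound among sections, and any other least upper bound agrees with g in almost every fibre.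

   Measurability of g: measurable sections are closed under max and under almost everywhere limits
   in rho_w. Both rest on the fact that phi applied to a step section is, fibrewise up to null sets,
   again a step section, for any phi :: real => real. For max take phi t = max t 0; for limits a
   diagonal choice of step approximations works once w |-> rho_w (s w) (t w) is measurable for step
   sections s and t, which is the case phi t = |t| / (1 + |t|). *)

theory Submission
  imports Defs
begin

section \<open>The metric of convergence in measure\<close>

definition abs_frac :: "real \<Rightarrow> real" where
  "abs_frac t = \<bar>t\<bar> / (1 + \<bar>t\<bar>)"

lemma abs_frac_nonneg: "0 \<le> abs_frac t"
  by (simp add: abs_frac_def)

lemma abs_frac_le_1: "abs_frac t \<le> 1"
  by (simp add: abs_frac_def)

lemma abs_frac_subadditive:
  assumes "\<bar>t\<bar> \<le> \<bar>u\<bar> + \<bar>v\<bar>"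
  shows "abs_frac t \<le> abs_frac u + abs_frac v"
proof -
  have "abs_frac t \<le> (\<bar>u\<bar> + \<bar>v\<bar>) / (1 + (\<bar>u\<bar> + \<bar>v\<bar>))"
    using assms by (simp add: abs_frac_def field_simps)
  also have "\<dots> = \<bar>u\<bar> / (1 + (\<bar>u\<bar> + \<bar>v\<bar>)) + \<bar>v\<bar> / (1 + (\<bar>u\<bar> + \<bar>v\<bar>))"
    by (simp add: add_divide_distrib)
  also have "\<dots> \<le> abs_frac u + abs_frac v"
    unfolding abs_frac_def by (intro add_mono frac_le) auto
  finally show ?thesis .
qed

lemma isCont_abs_frac: "isCont abs_frac t"
  unfolding abs_frac_def using abs_ge_zero[of t] by (intro continuous_intros) linarith

lemma borel_measurable_abs_frac [measurable]: "abs_frac \<in> borel_measurable borel"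
  unfolding abs_frac_def by measurable

lemma rho_eq_integral_abs_frac: "rho N a b = (\<integral>x. abs_frac (a x - b x) \<partial>N)"
  unfolding rho_def abs_frac_def ..

lemma rho_nonneg: "0 \<le> rho N a b"
  unfolding rho_eq_integral_abs_frac by (intro integral_nonneg_AE) (simp add: abs_frac_nonneg)

lemma rho_commute: "rho N a b = rho N b a"
  unfolding rho_def by (simp add: abs_minus_commute)

lemma rho_cong_AE:
  assumes "a \<in> borel_measurable N" "a' \<in> borel_measurable N" "b \<in> borel_measurable N"
    and "AE x in N. a x = a' x"
  shows "rho N a b = rho N a' b"
  unfolding rho_eq_integral_abs_frac using assms by (intro integral_cong_AE) auto

lemma tendsto_rho_0_by_bound:
  assumes "\<And>k. rho N (a k) (b k) \<le> c k" "c \<longlonglongrightarrow> 0"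
  shows "(\<lambda>k. rho N (a k) (b k)) \<longlonglongrightarrow> 0"
  using assms(2) by (rule Lim_null_comparison[rotated]) (simp add: rho_nonneg assms(1))

context finite_measure
begin

lemma integrable_abs_frac:
  "g \<in> borel_measurable M \<Longrightarrow> integrable M (\<lambda>x. abs_frac (g x))"
  by (intro integrable_const_bound[where B=1]) (auto simp: abs_frac_nonneg abs_frac_le_1)

lemma rho_le_integrals:
  assumes [measurable]: "a \<in> borel_measurable M" "b \<in> borel_measurable M"
    "c \<in> borel_measurable M" "d \<in> borel_measurable M"
    and "\<And>x. x \<in> space M \<Longrightarrow> \<bar>a x - b x\<bar> \<le> \<bar>c x\<bar> + \<bar>d x\<bar>"
  shows "rho M a b \<le> (\<integral>x. abs_frac (c x) \<partial>M) + (\<integral>x. abs_frac (d x) \<partial>M)"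
proof -
  have "rho M a b \<le> (\<integral>x. abs_frac (c x) + abs_frac (d x) \<partial>M)"
    unfolding rho_eq_integral_abs_frac using assms(5)
    by (intro integral_mono integrable_abs_frac Bochner_Integration.integrable_add)
      (auto simp: abs_frac_subadditive)
  also have "\<dots> = (\<integral>x. abs_frac (c x) \<partial>M) + (\<integral>x. abs_frac (d x) \<partial>M)"
    by (intro Bochner_Integration.integral_add integrable_abs_frac) auto
  finally show ?thesis .
qed

lemma rho_triangle:
  assumes "a \<in> borel_measurable M" "b \<in> borel_measurable M" "c \<in> borel_measurable M"
  shows "rho M a c \<le> rho M a b + rho M b c"
  unfolding rho_eq_integral_abs_frac[of M a b] rho_eq_integral_abs_frac[of M b c]
  using assms by (intro rho_le_integrals) auto

lemma rho_max_le:
  assumes "a \<in> borel_measurable M" "b \<in> borel_measurable M"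
    "c \<in> borel_measurable M" "d \<in> borel_measurable M"
  shows "rho M (\<lambda>x. max (a x) (b x)) (\<lambda>x. max (c x) (d x)) \<le> rho M a c + rho M b d"
  unfolding rho_eq_integral_abs_frac[of M a c] rho_eq_integral_abs_frac[of M b d]
  using assms by (intro rho_le_integrals) (auto simp: abs_if max_def)

lemma tendsto_rho_AE:
  assumes "\<And>k. s k \<in> borel_measurable M" "a \<in> borel_measurable M"
    and "AE x in M. (\<lambda>k. s k x) \<longlonglongrightarrow> a x"
  shows "(\<lambda>k. rho M (s k) a) \<longlonglongrightarrow> 0"
proof -
  have "(\<lambda>k. \<integral>x. abs_frac (s k x - a x) \<partial>M) \<longlonglongrightarrow> (\<integral>x. abs_frac (a x - a x) \<partial>M)"
  proof (rule integral_dominated_convergence[where w="\<lambda>x. 1"])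
    show "AE x in M. (\<lambda>k. abs_frac (s k x - a x)) \<longlonglongrightarrow> abs_frac (a x - a x)"
      using assms(3) by eventually_elim (intro isCont_tendsto_compose[OF isCont_abs_frac] tendsto_intros)
  qed (use assms in \<open>auto simp: abs_frac_nonneg abs_frac_le_1\<close>)
  then show ?thesis
    by (simp add: rho_eq_integral_abs_frac abs_frac_def)
qed

lemma tendsto_rho_right:
  assumes "a \<in> borel_measurable M" "\<And>k. b k \<in> borel_measurable M" "h \<in> borel_measurable M"
    and "(\<lambda>k. rho M (b k) h) \<longlonglongrightarrow> 0"
  shows "(\<lambda>k. rho M a (b k)) \<longlonglongrightarrow> rho M a h"
proof -
  have "\<bar>rho M a (b k) - rho M a h\<bar> \<le> rho M (b k) h" for k
    using rho_triangle[of a "b k" h] rho_triangle[of a h "b k"] assms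
    by (simp add: rho_commute[of M h])
  then have "(\<lambda>k. rho M a (b k) - rho M a h) \<longlonglongrightarrow> 0"
    by (intro Lim_null_comparison[OF _ assms(4)]) simp
  then show ?thesis
    by (simp add: LIM_zero_iff)
qed

lemma AE_tendsto_0_of_summable_integrals:
  assumes [measurable]: "\<And>m. G m \<in> borel_measurable M"
    and G01: "\<And>m x. 0 \<le> G m x" "\<And>m x. G m x \<le> 1"
    and summable: "summable (\<lambda>m. \<integral>x. G m x \<partial>M)"
  shows "AE x in M. (\<lambda>m. G m x) \<longlonglongrightarrow> (0::real)"
proof -
  have "0 \<le> (\<integral>x. G m x \<partial>M)" for m
    using G01 by (intro integral_nonneg_AE) auto
  then have "(\<Sum>m. ennreal (\<integral>x. G m x \<partial>M)) \<noteq> \<infinity>"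
    using summable ennreal_suminf_neq_top by auto
  moreover have "(\<Sum>m. ennreal (\<integral>x. G m x \<partial>M)) = (\<integral>\<^sup>+x. (\<Sum>m. ennreal (G m x)) \<partial>M)"
    using G01 by (simp add: nn_integral_suminf nn_integral_eq_integral integrable_const_bound[where B=1])
  ultimately have "AE x in M. (\<Sum>m. ennreal (G m x)) \<noteq> \<infinity>"
    by (intro nn_integral_PInf_AE) auto
  then show ?thesis
    by eventually_elim (use G01 in \<open>auto intro: summable_LIMSEQ_zero summable_suminf_not_top\<close>)
qed

lemma AE_tendsto_diagonal:
  assumes E: "\<And>m k. E m k \<in> borel_measurable M"
    and lim: "\<And>m. AE x in M. (\<lambda>k. E m k x) \<longlonglongrightarrow> 0"
  shows "\<exists>\<kappa>. AE x in M. (\<lambda>m. E m (\<kappa> m) x) \<longlonglongrightarrow> (0::real)"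
proof -
  define F where "F m k x = min \<bar>E m k x\<bar> 1" for m k x
  have F_meas [measurable]: "F m k \<in> borel_measurable M" for m k
    unfolding F_def using E by measurable
  have F01: "0 \<le> F m k x" "F m k x \<le> 1" for m k x
    by (auto simp: F_def)
  have int_F_lim: "(\<lambda>k. \<integral>x. F m k x \<partial>M) \<longlonglongrightarrow> 0" for m
  proof -
    have "(\<lambda>k. \<integral>x. F m k x \<partial>M) \<longlonglongrightarrow> (\<integral>x. 0 \<partial>M)"
    proof (rule integral_dominated_convergence[where w="\<lambda>x. 1"])
      show "AE x in M. (\<lambda>k. F m k x) \<longlonglongrightarrow> 0"
        using lim[of m] unfolding F_def
        by eventually_elim (auto intro: tendsto_eq_intros)
    qed (use F01 in auto)
    then show ?thesis by simp
  qed
  have "\<exists>k. (\<integral>x. F m k x \<partial>M) < (1/2)^m" for m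
    using order_tendstoD(2)[OF int_F_lim[of m], of "(1/2)^m"]
    by (auto simp: eventually_sequentially)
  then obtain \<kappa> where \<kappa>: "\<And>m. (\<integral>x. F m (\<kappa> m) x \<partial>M) < (1/2)^m"
    by metis
  have "summable (\<lambda>m. \<integral>x. F m (\<kappa> m) x \<partial>M)"
    using \<kappa> F01
    by (intro summable_comparison_test[OF _ summable_geometric[of "1/2::real"]])
      (auto intro!: exI[of _ 0] less_imp_le integral_nonneg_AE)
  then have "AE x in M. (\<lambda>m. F m (\<kappa> m) x) \<longlonglongrightarrow> 0"
    using F01 by (intro AE_tendsto_0_of_summable_integrals) auto
  then have "AE x in M. (\<lambda>m. E m (\<kappa> m) x) \<longlonglongrightarrow> 0"
  proof eventually_elim
    case (elim x)
    have "\<forall>\<^sub>F m in sequentially. F m (\<kappa> m) x < 1"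
      using order_tendstoD(2)[OF elim, of 1] by simp
    then have "\<forall>\<^sub>F m in sequentially. F m (\<kappa> m) x = \<bar>E m (\<kappa> m) x\<bar>"
      by eventually_elim (auto simp: F_def min_def split: if_splits)
    with elim have "(\<lambda>m. \<bar>E m (\<kappa> m) x\<bar>) \<longlonglongrightarrow> 0"
      by (rule Lim_transform_eventually)
    then show ?case
      by (simp add: tendsto_rabs_zero_iff)
  qed
  then show ?thesis
    by blast
qed

end

section \<open>Least upper bounds in the fibres and among sections\<close>

text \<open>Unlike \<open>SUP\<close>, the limit of the running maxima is Borel measurable without any
  boundedness assumption; on sequences that are not bounded above its value is junk.\<close>

definition sup_seq :: "(nat \<Rightarrow> real) \<Rightarrow> real" where
  "sup_seq a = lim (\<lambda>N. Max (a ` {..N}))"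

lemma running_max_tendsto_SUP:
  fixes a :: "nat \<Rightarrow> real"
  assumes bdd: "bdd_above (range a)"
  shows "(\<lambda>N. Max (a ` {..N})) \<longlonglongrightarrow> (SUP n. a n)"
proof -
  let ?m = "\<lambda>N. Max (a ` {..N})"
  have "incseq ?m"
    by (intro monoI Max_mono) auto
  moreover have m_le: "?m N \<le> (SUP n. a n)" for N
    using bdd by (auto intro: cSUP_upper)
  have m_bdd: "bdd_above (range ?m)"
    by (rule bdd_aboveI2) (rule m_le)
  ultimately have "?m \<longlonglongrightarrow> (SUP N. ?m N)"
    using m_bdd by (intro LIMSEQ_incseq_SUP)
  moreover have "(SUP N. ?m N) = (SUP n. a n)"
  proof (rule antisym)
    show "(SUP N. ?m N) \<le> (SUP n. a n)"
      using m_le by (intro cSUP_least) auto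
    show "(SUP n. a n) \<le> (SUP N. ?m N)"
    proof (rule cSUP_least)
      fix n
      have "a n \<le> ?m n"
        by (intro Max_ge) auto
      also have "\<dots> \<le> (SUP N. ?m N)"
        using m_bdd by (rule cSUP_upper[OF UNIV_I])
      finally show "a n \<le> (SUP N. ?m N)" .
    qed simp
  qed
  ultimately show ?thesis
    by simp
qed

lemma sup_seq_eq_SUP: "bdd_above (range a) \<Longrightarrow> sup_seq a = (SUP n. a n)"
  unfolding sup_seq_def by (rule limI) (rule running_max_tendsto_SUP)

lemma borel_measurable_sup_seq:
  "(\<And>n. F n \<in> borel_measurable N) \<Longrightarrow> (\<lambda>x. sup_seq (\<lambda>n. F n x)) \<in> borel_measurable N"
  unfolding sup_seq_def by measurable

lemma AE_bdd_above_of_le_fib: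
  fixes F :: "nat \<Rightarrow> 'x \<Rightarrow> real"
  assumes "\<And>n. le_fib N (F n) b"
  shows "AE x in N. bdd_above (range (\<lambda>n. F n x))"
proof -
  have "AE x in N. \<forall>n. F n x \<le> b x"
    using assms by (simp add: le_fib_def AE_all_countable)
  then show ?thesis
    by eventually_elim (auto intro: bdd_aboveI2)
qed

lemma is_lub_in_le_fib_sup_seq:
  fixes F :: "nat \<Rightarrow> 'x \<Rightarrow> real"
  assumes "\<And>n. F n \<in> borel_measurable N"
    and bdd: "AE x in N. bdd_above (range (\<lambda>n. F n x))"
  shows "is_lub_in (le_fib N) (borel_measurable N) F (\<lambda>x. sup_seq (\<lambda>n. F n x))"
  unfolding is_lub_in_def
proof (intro conjI allI ballI impI)
  show "(\<lambda>x. sup_seq (\<lambda>n. F n x)) \<in> borel_measurable N"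
    using assms(1) by (rule borel_measurable_sup_seq)
  show "le_fib N (F n) (\<lambda>x. sup_seq (\<lambda>n. F n x))" for n
    unfolding le_fib_def using bdd by eventually_elim (auto simp: sup_seq_eq_SUP intro: cSUP_upper)
  fix b assume "\<forall>n. le_fib N (F n) b"
  then have "AE x in N. \<forall>n. F n x \<le> b x"
    by (simp add: le_fib_def AE_all_countable)
  then show "le_fib N (\<lambda>x. sup_seq (\<lambda>n. F n x)) b"
    unfolding le_fib_def using bdd by eventually_elim (auto simp: sup_seq_eq_SUP intro!: cSUP_least)
qed

lemma is_lub_in_le_sec_of_fibres:
  assumes "g \<in> S" and S: "S \<subseteq> {h. \<forall>w. h w \<in> borel_measurable (M w)}"
    and lub: "AE w in Om. is_lub_in (le_fib (M w)) (borel_measurable (M w)) (\<lambda>n. f n w) (g w)"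
  shows "is_lub_in (le_sec Om M) S f g"
  unfolding is_lub_in_def
proof (intro conjI allI ballI impI)
  show "le_sec Om M (f n) g" for n
    unfolding le_sec_def using lub by eventually_elim (simp add: is_lub_in_def)
  fix h assume "h \<in> S" "\<forall>n. le_sec Om M (f n) h"
  then have "AE w in Om. \<forall>n. le_fib (M w) (f n w) (h w)"
    by (simp add: le_sec_def AE_all_countable)
  then show "le_sec Om M g h"
    unfolding le_sec_def using lub
  proof eventually_elim
    case (elim w)
    then show ?case
      using S \<open>h \<in> S\<close> by (auto simp: is_lub_in_def)
  qed
qed fact

lemma AE_bdd_above_of_le_sec:
  fixes f :: "nat \<Rightarrow> 'w \<Rightarrow> 'x \<Rightarrow> real"
  assumes "\<And>n. le_sec Om M (f n) G"
  shows "AE w in Om. AE x in M w. bdd_above (range (\<lambda>n. f n w x))"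
proof -
  have "AE w in Om. \<forall>n. le_fib (M w) (f n w) (G w)"
    using assms by (simp add: le_sec_def AE_all_countable)
  then show ?thesis
    by eventually_elim (auto intro: AE_bdd_above_of_le_fib)
qed

lemma AE_bdd_above_of_fibre_lubs:
  fixes f :: "nat \<Rightarrow> 'w \<Rightarrow> 'x \<Rightarrow> real"
  assumes "AE w in Om. \<exists>g. is_lub_in (le_fib (M w)) (S w) (\<lambda>n. f n w) g"
  shows "AE w in Om. AE x in M w. bdd_above (range (\<lambda>n. f n w x))"
  using assms by eventually_elim (auto simp: is_lub_in_def intro: AE_bdd_above_of_le_fib)

lemma is_lub_in_le_sec_imp_fibres:
  assumes S: "S \<subseteq> {h. \<forall>w. h w \<in> borel_measurable (M w)}"
    and G: "is_lub_in (le_sec Om M) S f G" and g: "is_lub_in (le_sec Om M) S f g"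
    and g_fibres: "AE w in Om. is_lub_in (le_fib (M w)) (borel_measurable (M w)) (\<lambda>n. f n w) (g w)"
  shows "AE w in Om. is_lub_in (le_fib (M w)) (borel_measurable (M w)) (\<lambda>n. f n w) (G w)"
proof -
  have "le_sec Om M G g"
    using G g by (simp add: is_lub_in_def)
  moreover have "AE w in Om. \<forall>n. le_fib (M w) (f n w) (G w)"
    using G by (simp add: is_lub_in_def le_sec_def AE_all_countable)
  ultimately show ?thesis
    using g_fibres unfolding le_sec_def
  proof eventually_elim
    case (elim w)
    show ?case
      unfolding is_lub_in_def
    proof (intro conjI allI ballI impI)
      show "G w \<in> borel_measurable (M w)"
        using G S by (auto simp: is_lub_in_def)
      show "le_fib (M w) (f n w) (G w)" for n
        using elim(2) by simp
      fix b assume "b \<in> borel_measurable (M w)" "\<forall>n. le_fib (M w) (f n w) b"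
      then have "le_fib (M w) (g w) b"
        using elim(3) by (simp add: is_lub_in_def)
      with elim(1) show "le_fib (M w) (G w) b"
        unfolding le_fib_def by eventually_elim simp
    qed
  qed
qed

section \<open>Step sections\<close>

text \<open>Step sections are represented by lists of blocks \<open>(A, xs)\<close>, \<open>xs\<close> a list of pairs
  (coefficient, section). Blocks need not be disjoint and sections range over any class \<open>C\<close>.\<close>

definition indicator_comb :: "(real \<times> ('w \<Rightarrow> 'x set)) list \<Rightarrow> 'w \<Rightarrow> 'x \<Rightarrow> real" where
  "indicator_comb xs w x = (\<Sum>(c, e)\<leftarrow>xs. c * indicator (e w) x)"

definition step_comb ::
  "('w set \<times> (real \<times> ('w \<Rightarrow> 'x set)) list) list \<Rightarrow> 'w \<Rightarrow> 'x \<Rightarrow> real" where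
  "step_comb zs w x = (\<Sum>(A, xs)\<leftarrow>zs. indicator A w * indicator_comb xs w x)"

definition disjoint_steps :: "('w set \<times> 'b) list \<Rightarrow> bool" where
  "disjoint_steps zs \<longleftrightarrow> (\<forall>w. (\<Sum>A\<leftarrow>map fst zs. indicator A w) \<le> (1::real))"

abbreviation combs_over :: "('w \<Rightarrow> 'x set) set \<Rightarrow> (real \<times> ('w \<Rightarrow> 'x set)) list set" where
  "combs_over C \<equiv> lists (UNIV \<times> C)"

abbreviation steps_over ::
  "'w measure \<Rightarrow> ('w \<Rightarrow> 'x set) set \<Rightarrow> ('w set \<times> (real \<times> ('w \<Rightarrow> 'x set)) list) list set" where
  "steps_over Om C \<equiv> lists (sets Om \<times> combs_over C)"

lemma indicator_comb_simps [simp]: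
  "indicator_comb [] w x = 0"
  "indicator_comb ((c, e) # xs) w x = c * indicator (e w) x + indicator_comb xs w x"
  "indicator_comb (xs @ ys) w x = indicator_comb xs w x + indicator_comb ys w x"
  by (simp_all add: indicator_comb_def)

lemma step_comb_simps [simp]:
  "step_comb [] w x = 0"
  "step_comb ((A, xs) # zs) w x = indicator A w * indicator_comb xs w x + step_comb zs w x"
  "step_comb (zs @ ys) w x = step_comb zs w x + step_comb ys w x"
  by (simp_all add: step_comb_def)

lemma indicator_comb_fun_simps:
  "indicator_comb [] w = (\<lambda>x. 0)"
  "indicator_comb ((c, e) # xs) w = (\<lambda>x. c * indicator (e w) x + indicator_comb xs w x)"
  by (simp_all add: fun_eq_iff)

lemma step_comb_fun_simps:
  "step_comb [] w = (\<lambda>x. 0)"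
  "step_comb ((A, xs) # zs) w = (\<lambda>x. indicator A w * indicator_comb xs w x + step_comb zs w x)"
  by (simp_all add: fun_eq_iff)

lemma indicator_comb_restrict:
  "indicator_comb (map (\<lambda>(c, e). (c, \<lambda>w. b w \<inter> e w)) xs) w x = indicator (b w) x * indicator_comb xs w x"
  by (induction xs) (auto simp: indicator_def algebra_simps)

definition branch_steps ::
  "'w set \<Rightarrow> 'w set \<Rightarrow> ('w set \<times> 'b) list \<Rightarrow> ('w set \<times> 'b) list \<Rightarrow> ('w set \<times> 'b) list" where
  "branch_steps S A ds1 ds2 = map (\<lambda>(B, xs). (A \<inter> B, xs)) ds1 @ map (\<lambda>(B, xs). ((S - A) \<inter> B, xs)) ds2"

lemma step_comb_branch_steps:
  assumes "w \<in> S"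
  shows "step_comb (branch_steps S A ds1 ds2) w x = (if w \<in> A then step_comb ds1 w x else step_comb ds2 w x)"
proof -
  have "step_comb (map (\<lambda>(B, xs). (A' \<inter> B, xs)) zs) w x = indicator A' w * step_comb zs w x" for A' zs
    by (induction zs) (auto simp: indicator_def algebra_simps)
  with assms show ?thesis
    by (simp add: branch_steps_def)
qed

lemma branch_steps_in_steps_over:
  assumes "A \<in> sets Om" "ds1 \<in> steps_over Om C" "ds2 \<in> steps_over Om C"
  shows "branch_steps (space Om) A ds1 ds2 \<in> steps_over Om C"
proof -
  have "map (\<lambda>(B, xs). (A' \<inter> B, xs)) zs \<in> steps_over Om C"
    if "A' \<in> sets Om" "zs \<in> steps_over Om C" for A' zs
    using that by (induction zs) auto
  with assms show ?thesis
    by (simp add: branch_steps_def sets.compl_sets)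
qed

lemma disjoint_branch_steps:
  assumes "disjoint_steps ds1" "disjoint_steps ds2"
  shows "disjoint_steps (branch_steps S A ds1 ds2)"
proof -
  have restrict: "(\<Sum>B\<leftarrow>map fst (map (\<lambda>(B, xs). (A' \<inter> B, xs)) zs). indicator B w)
      = indicator A' w * (\<Sum>B\<leftarrow>map fst zs. indicator B w :: real)" for A' zs w
    by (induction zs) (auto simp: indicator_def)
  have "(\<Sum>B\<leftarrow>map fst (branch_steps S A ds1 ds2). indicator B w)
      = indicator A w * (\<Sum>B\<leftarrow>map fst ds1. indicator B w)
        + indicator (S - A) w * (\<Sum>B\<leftarrow>map fst ds2. indicator B w :: real)" for w
    by (simp only: branch_steps_def map_append sum_list_append restrict)
  then show ?thesis
    using assms unfolding disjoint_steps_def by (auto simp: indicator_def)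
qed

lemma steps_over_diff:
  assumes "zs \<in> steps_over Om C" "ys \<in> steps_over Om C"
  obtains ds where "ds \<in> steps_over Om C" "\<And>w x. step_comb ds w x = step_comb zs w x - step_comb ys w x"
proof -
  have uminus_comb: "map (\<lambda>(c, e). (- c, e)) xs \<in> combs_over C \<longleftrightarrow> xs \<in> combs_over C"
    "indicator_comb (map (\<lambda>(c, e). (- c, e)) xs) w x = - indicator_comb xs w x" for xs w x
    by (induction xs) auto
  let ?ys = "map (\<lambda>(B, xs). (B, map (\<lambda>(c, e). (- c, e)) xs)) ys"
  have "?ys \<in> steps_over Om C \<and> step_comb ?ys w x = - step_comb ys w x" for w x
    using assms(2) by (induction ys) (auto simp: uminus_comb)
  with assms(1) show ?thesis
    by (intro that[of "zs @ ?ys"]) auto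
qed

lemma lin_comb_L_iff: "lin_comb_L L u \<longleftrightarrow> (\<exists>xs\<in>combs_over L. u = indicator_comb xs)"
proof
  assume "lin_comb_L L u"
  then obtain J c e where J: "finite (J::nat set)" "\<forall>j\<in>J. e j \<in> L"
    and u: "u = (\<lambda>w x. \<Sum>j\<in>J. c j * indicator (e j w) x)"
    unfolding lin_comb_L_def by blast
  let ?xs = "map (\<lambda>j. (c j, e j)) (sorted_list_of_set J)"
  have "u = indicator_comb ?xs"
    using J(1) by (simp add: u indicator_comb_def sum_list_distinct_conv_sum_set fun_eq_iff)
  moreover have "?xs \<in> combs_over L"
    using J by auto
  ultimately show "\<exists>xs\<in>combs_over L. u = indicator_comb xs"
    by blast
next
  assume "\<exists>xs\<in>combs_over L. u = indicator_comb xs"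
  then obtain xs where xs: "xs \<in> combs_over L" and u: "u = indicator_comb xs"
    by blast
  have "snd (xs ! j) \<in> L" if "j < length xs" for j
    using in_listsD[OF xs] nth_mem[OF that] by (auto simp: mem_Times_iff)
  then show "lin_comb_L L u"
    unfolding lin_comb_L_def
    by (intro exI[of _ "{..<length xs}"] exI[of _ "\<lambda>j. fst (xs ! j)"] exI[of _ "\<lambda>j. snd (xs ! j)"])
      (auto simp: u indicator_comb_def sum_list_sum_nth atLeast0LessThan case_prod_unfold fun_eq_iff)
qed

lemma step_section_imp_step_comb:
  assumes "step_section Om L s"
  obtains zs where "zs \<in> steps_over Om L" "s = step_comb zs"
proof -
  obtain I A u where I: "finite (I::nat set)" "\<forall>i\<in>I. A i \<in> sets Om" "\<forall>i\<in>I. lin_comb_L L (u i)"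
    and s: "s = (\<lambda>w x. \<Sum>i\<in>I. indicator (A i) w * u i w x)"
    using assms unfolding step_section_def by blast
  obtain xs where xs: "\<forall>i\<in>I. xs i \<in> combs_over L \<and> u i = indicator_comb (xs i)"
    using I(3) unfolding lin_comb_L_iff by metis
  let ?zs = "map (\<lambda>i. (A i, xs i)) (sorted_list_of_set I)"
  have "s = step_comb ?zs"
    using I(1) xs
    by (simp add: s step_comb_def sum_list_distinct_conv_sum_set fun_eq_iff cong: sum.cong)
  moreover have "?zs \<in> steps_over Om L"
    using I xs by (fastforce simp: in_lists_conv_set)
  ultimately show ?thesis
    using that by blast
qed

lemma disjoint_steps_imp_disjoint_family:
  assumes "disjoint_steps zs"
  shows "disjoint_family_on (\<lambda>i. fst (zs ! i)) {..<length zs}"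
  unfolding disjoint_family_on_def
proof (intro ballI impI equals0I)
  fix i j w assume ij: "i \<in> {..<length zs}" "j \<in> {..<length zs}" "i \<noteq> j"
    and "w \<in> fst (zs ! i) \<inter> fst (zs ! j)"
  then have "(2::real) = (\<Sum>k\<in>{i, j}. indicator (fst (zs ! k)) w)"
    by simp
  also have "\<dots> \<le> (\<Sum>k\<in>{..<length zs}. indicator (fst (zs ! k)) w)"
    using ij by (intro sum_mono2) auto
  also have "\<dots> \<le> 1"
    using assms by (simp add: disjoint_steps_def sum_list_sum_nth atLeast0LessThan)
  finally show False
    by simp
qed

lemma step_comb_step_section:
  assumes zs: "zs \<in> steps_over Om L" and disj: "disjoint_steps zs"
  shows "step_section Om L (step_comb zs)"
  unfolding step_section_def
proof (intro exI conjI)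
  let ?I = "{..<length zs}"
  have zs_nth: "fst (zs ! i) \<in> sets Om" "snd (zs ! i) \<in> combs_over L" if "i \<in> ?I" for i
    using in_listsD[OF zs] nth_mem[of i zs] that by (auto simp: mem_Times_iff)
  show "step_comb zs = (\<lambda>w x. \<Sum>i\<in>?I. indicator (fst (zs ! i)) w * indicator_comb (snd (zs ! i)) w x)"
    by (simp add: step_comb_def sum_list_sum_nth atLeast0LessThan case_prod_unfold fun_eq_iff)
  show "\<forall>i\<in>?I. lin_comb_L L (indicator_comb (snd (zs ! i)))"
    using zs_nth by (auto simp: lin_comb_L_iff)
  show "disjoint_family_on (\<lambda>i. fst (zs ! i)) ?I"
    using disj by (rule disjoint_steps_imp_disjoint_family)
  show "finite ?I"
    by simp
  show "\<forall>i\<in>?I. fst (zs ! i) \<in> sets Om"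
    using zs_nth by auto
qed

section \<open>The measurable bundle\<close>

lemma measure_symdiff_eq_0_iff:
  assumes "finite_measure N" "A \<in> sets N" "B \<in> sets N"
  shows "measure N (symdiff A B) = 0 \<longleftrightarrow> (AE x in N. x \<in> A \<longleftrightarrow> x \<in> B)"
proof -
  have S: "symdiff A B \<in> sets N"
    using assms by (auto simp: symdiff_def)
  have "measure N (symdiff A B) = 0 \<longleftrightarrow> symdiff A B \<in> null_sets N"
    using S finite_measure.emeasure_eq_measure[OF assms(1)] by (auto simp: measure_nonneg)
  also have "\<dots> \<longleftrightarrow> (AE x in N. x \<notin> symdiff A B)"
    using S by (rule AE_iff_null_sets)
  also have "\<dots> \<longleftrightarrow> (AE x in N. x \<in> A \<longleftrightarrow> x \<in> B)"
    by (intro AE_cong) (auto simp: symdiff_def)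
  finally show ?thesis .
qed

locale boolean_bundle =
  fixes Om :: "'w measure" and M :: "'w \<Rightarrow> 'x measure" and L :: "('w \<Rightarrow> 'x set) set"
  assumes measurable_bundle: "measurable_bundle Om M L"
begin

lemma finite_measure_Om: "finite_measure Om"
  using measurable_bundle by (simp add: measurable_bundle_def)

lemma finite_measure_fibre: "finite_measure (M w)"
  using measurable_bundle by (simp add: measurable_bundle_def)

lemma L_sets: "u \<in> L \<Longrightarrow> u w \<in> sets (M w)"
  using measurable_bundle by (simp add: measurable_bundle_def)

lemma L_nonempty: "L \<noteq> {}"
  using measurable_bundle unfolding measurable_bundle_def
  by (metis empty_iff sets.empty_sets zero_less_one)

lemma L_compl:
  assumes "u \<in> L"
  shows "\<exists>v\<in>L. \<forall>w. AE x in M w. x \<in> v w \<longleftrightarrow> x \<in> space (M w) - u w"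
proof -
  obtain v where "v \<in> L" "\<And>w. measure (M w) (symdiff (v w) (space (M w) - u w)) = 0"
    using measurable_bundle assms unfolding measurable_bundle_def by blast
  then show ?thesis
    using L_sets assms by (auto simp: measure_symdiff_eq_0_iff[OF finite_measure_fibre] sets.compl_sets)
qed

lemma L_Un:
  assumes "u \<in> L" "v \<in> L"
  shows "\<exists>z\<in>L. \<forall>w. AE x in M w. x \<in> z w \<longleftrightarrow> x \<in> u w \<union> v w"
proof -
  obtain z where "z \<in> L" "\<And>w. measure (M w) (symdiff (z w) (u w \<union> v w)) = 0"
    using measurable_bundle assms unfolding measurable_bundle_def by blast
  then show ?thesis
    using L_sets assms by (auto simp: measure_symdiff_eq_0_iff[OF finite_measure_fibre])
qed

text \<open>\<open>L\<close> is closed under complement and union only up to null sets in each fibre;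
  \<open>L_ae\<close> is closed under them exactly.\<close>

definition L_ae :: "('w \<Rightarrow> 'x set) set" where
  "L_ae = {a. (\<forall>w. a w \<in> sets (M w)) \<and> (\<exists>v\<in>L. \<forall>w. AE x in M w. x \<in> a w \<longleftrightarrow> x \<in> v w)}"

lemma L_aeI:
  "(\<And>w. a w \<in> sets (M w)) \<Longrightarrow> v \<in> L \<Longrightarrow> (\<And>w. AE x in M w. x \<in> a w \<longleftrightarrow> x \<in> v w) \<Longrightarrow> a \<in> L_ae"
  unfolding L_ae_def by blast

lemma L_ae_sets: "a \<in> L_ae \<Longrightarrow> a w \<in> sets (M w)"
  unfolding L_ae_def by blast

lemma L_subset_L_ae: "L \<subseteq> L_ae"
  by (auto intro: L_aeI L_sets)

lemma L_ae_compl: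
  assumes "a \<in> L_ae"
  shows "(\<lambda>w. space (M w) - a w) \<in> L_ae"
proof -
  obtain v where v: "v \<in> L" "\<And>w. AE x in M w. x \<in> a w \<longleftrightarrow> x \<in> v w"
    using assms unfolding L_ae_def by blast
  obtain v' where v': "v' \<in> L" "\<And>w. AE x in M w. x \<in> v' w \<longleftrightarrow> x \<in> space (M w) - v w"
    using L_compl[OF v(1)] by blast
  show ?thesis
  proof (rule L_aeI[OF _ v'(1)])
    show "AE x in M w. x \<in> space (M w) - a w \<longleftrightarrow> x \<in> v' w" for w
      using v(2)[of w] v'(2)[of w] by eventually_elim auto
  qed (use assms L_ae_sets in auto)
qed

lemma L_ae_Un:
  assumes "a \<in> L_ae" "b \<in> L_ae"
  shows "(\<lambda>w. a w \<union> b w) \<in> L_ae"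
proof -
  obtain u where u: "u \<in> L" "\<And>w. AE x in M w. x \<in> a w \<longleftrightarrow> x \<in> u w"
    using assms(1) unfolding L_ae_def by blast
  obtain v where v: "v \<in> L" "\<And>w. AE x in M w. x \<in> b w \<longleftrightarrow> x \<in> v w"
    using assms(2) unfolding L_ae_def by blast
  obtain z where z: "z \<in> L" "\<And>w. AE x in M w. x \<in> z w \<longleftrightarrow> x \<in> u w \<union> v w"
    using L_Un[OF u(1) v(1)] by blast
  show ?thesis
  proof (rule L_aeI[OF _ z(1)])
    show "AE x in M w. x \<in> a w \<union> b w \<longleftrightarrow> x \<in> z w" for w
      using u(2)[of w] v(2)[of w] z(2)[of w] by eventually_elim auto
  qed (use assms L_ae_sets in auto)
qed

lemma L_ae_Int:
  assumes "a \<in> L_ae" "b \<in> L_ae"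
  shows "(\<lambda>w. a w \<inter> b w) \<in> L_ae"
proof -
  have "(\<lambda>w. space (M w) - ((space (M w) - a w) \<union> (space (M w) - b w))) \<in> L_ae"
    using assms by (intro L_ae_compl L_ae_Un)
  moreover have "(\<lambda>w. space (M w) - ((space (M w) - a w) \<union> (space (M w) - b w))) = (\<lambda>w. a w \<inter> b w)"
    using assms by (auto dest: L_ae_sets sets.sets_into_space)
  ultimately show ?thesis
    by simp
qed

lemma L_ae_space: "(\<lambda>w. space (M w)) \<in> L_ae"
proof -
  obtain u where u: "u \<in> L"
    using L_nonempty by blast
  then have "(\<lambda>w. u w \<union> (space (M w) - u w)) \<in> L_ae"
    using L_subset_L_ae by (intro L_ae_Un L_ae_compl) auto
  moreover have "(\<lambda>w. u w \<union> (space (M w) - u w)) = (\<lambda>w. space (M w))"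
    using u L_sets sets.sets_into_space by blast
  ultimately show ?thesis
    by simp
qed

lemma L_ae_empty: "(\<lambda>w. {}) \<in> L_ae"
  using L_ae_compl[OF L_ae_space] by simp

text \<open>Only distances between members of \<open>L\<close> are known to be measurable, so \<open>a w\<close> is
  compared with a member \<open>z\<close> of \<open>L\<close> that is empty almost everywhere.\<close>

lemma measurable_measure_L_ae:
  assumes "a \<in> L_ae"
  shows "(\<lambda>w. measure (M w) (a w)) \<in> borel_measurable Om"
proof -
  obtain v where v: "v \<in> L" "\<And>w. AE x in M w. x \<in> a w \<longleftrightarrow> x \<in> v w"
    using assms unfolding L_ae_def by blast
  obtain z where z: "z \<in> L" "\<And>w. AE x in M w. x \<notin> z w"
    using L_ae_empty unfolding L_ae_def by auto
  have "measure (M w) (a w) = measure (M w) (symdiff (v w) (z w))" for w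
  proof (rule measure_eq_AE)
    show "AE x in M w. x \<in> a w \<longleftrightarrow> x \<in> symdiff (v w) (z w)"
      using v(2)[of w] z(2)[of w] by eventually_elim (auto simp: symdiff_def)
  qed (use assms v z L_sets L_ae_sets in \<open>auto simp: symdiff_def\<close>)
  then show ?thesis
    using measurable_bundle v(1) z(1) unfolding measurable_bundle_def by simp
qed

lemma restrict_combs_over_L_ae:
  "b \<in> L_ae \<Longrightarrow> xs \<in> combs_over L_ae \<Longrightarrow> map (\<lambda>(c, e). (c, \<lambda>w. b w \<inter> e w)) xs \<in> combs_over L_ae"
  by (induction xs) (auto intro: L_ae_Int)

text \<open>Composition with an arbitrary \<open>\<phi>\<close> rests on
  \<open>\<phi> (c * 1\<^sub>e + r) = 1\<^sub>e * \<phi> (c + r) + (1 - 1\<^sub>e) * \<phi> r\<close>; for step combinations the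
  blocks already containing the point are accumulated in \<open>g\<close>.\<close>

lemma indicator_comb_comp:
  assumes "xs \<in> combs_over L_ae"
  shows "\<exists>ys\<in>combs_over L_ae. \<forall>w. \<forall>x\<in>space (M w). \<phi> (indicator_comb xs w x) = indicator_comb ys w x"
  using assms
proof (induction xs arbitrary: \<phi>)
  case Nil
  show ?case
    using L_ae_space by (intro bexI[of _ "[(\<phi> 0, \<lambda>w. space (M w))]"]) auto
next
  case (Cons p xs)
  obtain c e where p: "p = (c, e)"
    by fastforce
  with Cons.hyps have e: "e \<in> L_ae"
    by auto
  obtain ys1 where ys1: "ys1 \<in> combs_over L_ae"
    "\<forall>w. \<forall>x\<in>space (M w). \<phi> (c + indicator_comb xs w x) = indicator_comb ys1 w x"
    using Cons.IH[of "\<lambda>t. \<phi> (c + t)"] by auto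
  obtain ys2 where ys2: "ys2 \<in> combs_over L_ae"
    "\<forall>w. \<forall>x\<in>space (M w). \<phi> (indicator_comb xs w x) = indicator_comb ys2 w x"
    using Cons.IH[of \<phi>] by auto
  let ?ys = "map (\<lambda>(d, a). (d, \<lambda>w. e w \<inter> a w)) ys1
    @ map (\<lambda>(d, a). (d, \<lambda>w. (space (M w) - e w) \<inter> a w)) ys2"
  show ?case
  proof (rule bexI[of _ ?ys])
    show "?ys \<in> combs_over L_ae"
      using ys1(1) ys2(1) e L_ae_compl[OF e] by (simp add: restrict_combs_over_L_ae)
    show "\<forall>w. \<forall>x\<in>space (M w). \<phi> (indicator_comb (p # xs) w x) = indicator_comb ?ys w x"
      using ys1(2) ys2(2)
      by (auto simp: p indicator_comb_restrict[where b="\<lambda>w. space (M w) - e w"]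
          indicator_comb_restrict indicator_def)
  qed
qed

lemma step_comb_comp_add:
  assumes "zs \<in> steps_over Om L_ae" "g \<in> combs_over L_ae"
  shows "\<exists>ds\<in>steps_over Om L_ae. disjoint_steps ds \<and>
    (\<forall>w\<in>space Om. \<forall>x\<in>space (M w). \<phi> (indicator_comb g w x + step_comb zs w x) = step_comb ds w x)"
  using assms
proof (induction zs arbitrary: g)
  case Nil
  obtain ys where "ys \<in> combs_over L_ae" "\<forall>w. \<forall>x\<in>space (M w). \<phi> (indicator_comb g w x) = indicator_comb ys w x"
    using indicator_comb_comp[of g] Nil.prems by blast
  then show ?case
    by (intro bexI[of _ "[(space Om, ys)]"]) (auto simp: disjoint_steps_def)
next
  case (Cons p zs)
  obtain A xs where p: "p = (A, xs)"
    by fastforce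
  with Cons.hyps have A: "A \<in> sets Om" and xs: "xs \<in> combs_over L_ae"
    by auto
  obtain ds1 where ds1: "ds1 \<in> steps_over Om L_ae" "disjoint_steps ds1"
    "\<forall>w\<in>space Om. \<forall>x\<in>space (M w). \<phi> (indicator_comb (g @ xs) w x + step_comb zs w x) = step_comb ds1 w x"
    using Cons.IH[of "g @ xs"] Cons.prems xs by auto
  obtain ds2 where ds2: "ds2 \<in> steps_over Om L_ae" "disjoint_steps ds2"
    "\<forall>w\<in>space Om. \<forall>x\<in>space (M w). \<phi> (indicator_comb g w x + step_comb zs w x) = step_comb ds2 w x"
    using Cons.IH[of g] Cons.prems by auto
  have "\<phi> (indicator_comb g w x + step_comb (p # zs) w x) = step_comb (branch_steps (space Om) A ds1 ds2) w x"
    if "w \<in> space Om" "x \<in> space (M w)" for w x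
    using ds1(3) ds2(3) that by (simp add: p step_comb_branch_steps add.assoc)
  with A ds1 ds2 show ?case
    by (intro bexI[of _ "branch_steps (space Om) A ds1 ds2"])
      (auto simp: branch_steps_in_steps_over disjoint_branch_steps)
qed

lemma step_comb_comp:
  assumes "zs \<in> steps_over Om L_ae"
  shows "\<exists>ds\<in>steps_over Om L_ae. disjoint_steps ds \<and>
    (\<forall>w\<in>space Om. \<forall>x\<in>space (M w). \<phi> (step_comb zs w x) = step_comb ds w x)"
  using step_comb_comp_add[OF assms, of "[]" \<phi>] by simp

lemma borel_measurable_indicator_comb:
  "xs \<in> combs_over L_ae \<Longrightarrow> indicator_comb xs w \<in> borel_measurable (M w)"
proof (induction xs rule: lists.induct)
  case (Cons p xs)
  then show ?case
    by (cases p) (auto simp: indicator_comb_fun_simps L_ae_sets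
        intro!: borel_measurable_add borel_measurable_times borel_measurable_indicator)
qed (simp add: indicator_comb_fun_simps)

lemma integrable_indicator_comb:
  "xs \<in> combs_over L_ae \<Longrightarrow> integrable (M w) (indicator_comb xs w)"
proof (induction xs rule: lists.induct)
  case (Cons p xs)
  have "emeasure (M w) (e w) < \<infinity>" for e
    using finite_measure.emeasure_finite[OF finite_measure_fibre] by (simp add: top.not_eq_extremum)
  with Cons show ?case
    by (cases p) (auto simp: indicator_comb_fun_simps L_ae_sets)
qed (simp add: indicator_comb_fun_simps)

lemma measurable_integral_indicator_comb:
  "xs \<in> combs_over L_ae \<Longrightarrow> (\<lambda>w. \<integral>x. indicator_comb xs w x \<partial>M w) \<in> borel_measurable Om"
proof (induction xs rule: lists.induct)
  case (Cons p xs)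
  obtain c e where p: "p = (c, e)" and e: "e \<in> L_ae"
    using Cons.hyps by (cases p) auto
  have "(\<integral>x. indicator_comb (p # xs) w x \<partial>M w) = c * measure (M w) (e w) + (\<integral>x. indicator_comb xs w x \<partial>M w)" for w
    using e Cons.hyps finite_measure.emeasure_finite[OF finite_measure_fibre]
    by (simp add: p indicator_comb_fun_simps integrable_indicator_comb L_ae_sets top.not_eq_extremum)
  then show ?case
    using Cons.IH measurable_measure_L_ae[OF e] by simp
qed (simp add: indicator_comb_fun_simps)

lemma borel_measurable_step_comb:
  "zs \<in> steps_over Om L_ae \<Longrightarrow> step_comb zs w \<in> borel_measurable (M w)"
proof (induction zs rule: lists.induct)
  case (Cons p zs)
  obtain A xs where p: "p = (A, xs)" and xs: "xs \<in> combs_over L_ae"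
    using Cons.hyps by (cases p) auto
  show ?case
    using Cons.IH borel_measurable_indicator_comb[OF xs]
    by (auto simp: p step_comb_fun_simps intro!: borel_measurable_add borel_measurable_times)
qed (simp add: step_comb_fun_simps)

lemma measurable_integral_step_comb:
  "zs \<in> steps_over Om L_ae \<Longrightarrow> (\<lambda>w. \<integral>x. step_comb zs w x \<partial>M w) \<in> borel_measurable Om"
proof (induction zs rule: lists.induct)
  case (Cons p zs)
  obtain A xs where p: "p = (A, xs)" and A: "A \<in> sets Om" and xs: "xs \<in> combs_over L_ae"
    using Cons.hyps by (cases p) auto
  have integrable: "integrable (M w) (step_comb zs w)" for w
    using Cons.hyps(2)
  proof (induction zs rule: lists.induct)
    case (Cons q zs)
    obtain B ys where q: "q = (B, ys)" and ys: "ys \<in> combs_over L_ae"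
      using Cons.hyps by (cases q) auto
    show ?case
      using Cons.IH integrable_indicator_comb[OF ys]
      by (auto simp: q step_comb_fun_simps intro!: Bochner_Integration.integrable_add integrable_mult_right)
  qed (simp add: step_comb_fun_simps)
  have "(\<integral>x. step_comb (p # zs) w x \<partial>M w)
      = indicator A w * (\<integral>x. indicator_comb xs w x \<partial>M w) + (\<integral>x. step_comb zs w x \<partial>M w)" for w
    using xs integrable by (simp add: p step_comb_fun_simps integrable_indicator_comb)
  then show ?case
    using Cons.IH A measurable_integral_indicator_comb[OF xs] by simp
qed (simp add: step_comb_fun_simps)

lemma combs_over_L_ae_to_L:
  assumes "xs \<in> combs_over L_ae"
  shows "\<exists>ys\<in>combs_over L. \<forall>w. AE x in M w. indicator_comb ys w x = indicator_comb xs w x"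
  using assms
proof (induction xs rule: lists.induct)
  case (Cons p xs)
  obtain c e where p: "p = (c, e)" and e: "e \<in> L_ae"
    using Cons.hyps by (cases p) auto
  obtain v where v: "v \<in> L" "\<And>w. AE x in M w. x \<in> e w \<longleftrightarrow> x \<in> v w"
    using e unfolding L_ae_def by blast
  obtain ys where ys: "ys \<in> combs_over L" "\<And>w. AE x in M w. indicator_comb ys w x = indicator_comb xs w x"
    using Cons.IH by blast
  have "AE x in M w. indicator_comb ((c, v) # ys) w x = indicator_comb (p # xs) w x" for w
    using v(2)[of w] ys(2)[of w] by eventually_elim (simp add: p indicator_def)
  with v(1) ys(1) show ?case
    by (intro bexI[of _ "(c, v) # ys"]) auto
qed (intro bexI[of _ "[]"], auto)

lemma steps_over_L_ae_to_L:
  assumes "zs \<in> steps_over Om L_ae"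
  shows "\<exists>ys\<in>steps_over Om L. map fst ys = map fst zs \<and>
    (\<forall>w. AE x in M w. step_comb ys w x = step_comb zs w x)"
  using assms
proof (induction zs rule: lists.induct)
  case (Cons p zs)
  obtain A xs where p: "p = (A, xs)" and A: "A \<in> sets Om" and xs: "xs \<in> combs_over L_ae"
    using Cons.hyps by (cases p) auto
  obtain xs' where xs': "xs' \<in> combs_over L" "\<And>w. AE x in M w. indicator_comb xs' w x = indicator_comb xs w x"
    using combs_over_L_ae_to_L[OF xs] by blast
  obtain ys where ys: "ys \<in> steps_over Om L" "map fst ys = map fst zs"
    "\<And>w. AE x in M w. step_comb ys w x = step_comb zs w x"
    using Cons.IH by blast
  have "AE x in M w. step_comb ((A, xs') # ys) w x = step_comb (p # zs) w x" for w
    using xs'(2)[of w] ys(3)[of w] by eventually_elim (simp add: p)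
  with A xs'(1) ys(1,2) show ?case
    by (intro bexI[of _ "(A, xs') # ys"]) (auto simp: p)
qed (intro bexI[of _ "[]"], auto)

lemma step_comb_ae_step_section:
  assumes "zs \<in> steps_over Om L_ae"
  shows "\<exists>\<sigma>. step_section Om L \<sigma> \<and> (\<forall>w\<in>space Om. AE x in M w. \<sigma> w x = step_comb zs w x)"
proof -
  obtain ds where ds: "ds \<in> steps_over Om L_ae" "disjoint_steps ds"
    "\<forall>w\<in>space Om. \<forall>x\<in>space (M w). id (step_comb zs w x) = step_comb ds w x"
    using step_comb_comp[OF assms, of id] by blast
  obtain ys where ys: "ys \<in> steps_over Om L" "map fst ys = map fst ds"
    "\<forall>w. AE x in M w. step_comb ys w x = step_comb ds w x"
    using steps_over_L_ae_to_L[OF ds(1)] by blast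
  have "step_section Om L (step_comb ys)"
    using ys(1) ds(2) ys(2) by (intro step_comb_step_section) (simp_all add: disjoint_steps_def)
  moreover have "AE x in M w. step_comb ys w x = step_comb zs w x" if "w \<in> space Om" for w
    using ys(3) AE_space ds(3) that by (auto elim!: AE_mp)
  ultimately show ?thesis
    by blast
qed

lemma step_section_L_ae:
  assumes "step_section Om L s"
  obtains zs where "zs \<in> steps_over Om L_ae" "s = step_comb zs"
proof -
  obtain zs where "zs \<in> steps_over Om L" "s = step_comb zs"
    using step_section_imp_step_comb[OF assms] by blast
  moreover have "steps_over Om L \<subseteq> steps_over Om L_ae"
    using L_subset_L_ae by (intro lists_mono) auto
  ultimately show ?thesis
    using that by blast
qed

lemma step_section_borel: "step_section Om L s \<Longrightarrow> s w \<in> borel_measurable (M w)"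
  by (metis step_section_L_ae borel_measurable_step_comb)

lemma step_sections_diff:
  assumes "step_section Om L s" "step_section Om L t"
  shows "\<exists>zs\<in>steps_over Om L_ae. \<forall>w x. step_comb zs w x = s w x - t w x"
proof -
  obtain zs1 where "zs1 \<in> steps_over Om L_ae" "s = step_comb zs1"
    using step_section_L_ae[OF assms(1)] by blast
  moreover obtain zs2 where "zs2 \<in> steps_over Om L_ae" "t = step_comb zs2"
    using step_section_L_ae[OF assms(2)] by blast
  ultimately show ?thesis
    using steps_over_diff[of zs1 Om L_ae zs2] by metis
qed

lemma measurable_rho_step_sections:
  assumes "step_section Om L s" "step_section Om L t"
  shows "(\<lambda>w. rho (M w) (s w) (t w)) \<in> borel_measurable Om"
proof -
  obtain zs where zs: "zs \<in> steps_over Om L_ae" "\<And>w x. step_comb zs w x = s w x - t w x"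
    using step_sections_diff[OF assms] by blast
  obtain ds where ds: "ds \<in> steps_over Om L_ae"
    "\<forall>w\<in>space Om. \<forall>x\<in>space (M w). abs_frac (step_comb zs w x) = step_comb ds w x"
    using step_comb_comp[OF zs(1), of abs_frac] by blast
  have "rho (M w) (s w) (t w) = (\<integral>x. step_comb ds w x \<partial>M w)" if "w \<in> space Om" for w
    unfolding rho_eq_integral_abs_frac
    using ds(2) that by (intro Bochner_Integration.integral_cong) (auto simp: zs(2))
  then show ?thesis
    using measurable_integral_step_comb[OF ds(1)] by (subst measurable_cong) auto
qed

lemma step_section_max:
  assumes "step_section Om L s" "step_section Om L t"
  shows "\<exists>\<sigma>. step_section Om L \<sigma> \<and> (\<forall>w\<in>space Om. AE x in M w. \<sigma> w x = max (s w x) (t w x))"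
proof -
  obtain zs where zs: "zs \<in> steps_over Om L_ae" "\<And>w x. step_comb zs w x = s w x - t w x"
    using step_sections_diff[OF assms] by blast
  obtain zs2 where zs2: "zs2 \<in> steps_over Om L_ae" "t = step_comb zs2"
    using step_section_L_ae[OF assms(2)] by blast
  obtain ds where ds: "ds \<in> steps_over Om L_ae"
    "\<forall>w\<in>space Om. \<forall>x\<in>space (M w). max (step_comb zs w x) 0 = step_comb ds w x"
    using step_comb_comp[OF zs(1), of "\<lambda>r. max r 0"] by blast
  obtain \<sigma> where \<sigma>: "step_section Om L \<sigma>"
    "\<forall>w\<in>space Om. AE x in M w. \<sigma> w x = step_comb (ds @ zs2) w x"
    using step_comb_ae_step_section[of "ds @ zs2"] ds(1) zs2(1) by auto
  have max_eq: "step_comb (ds @ zs2) w x = max (s w x) (t w x)" if "w \<in> space Om" "x \<in> space (M w)" for w x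
    using ds(2)[rule_format, OF that, symmetric] by (simp add: zs(2) zs2(2)[symmetric] max_def)
  have "AE x in M w. \<sigma> w x = max (s w x) (t w x)" if w: "w \<in> space Om" for w
    using \<sigma>(2)[rule_format, OF w] AE_space
  proof eventually_elim
    case (elim x)
    then show ?case
      using max_eq[OF w, of x] by simp
  qed
  with \<sigma>(1) show ?thesis
    by blast
qed

section \<open>Measurable sections\<close>

lemma measurable_section_borel: "measurable_section Om M L f \<Longrightarrow> f w \<in> borel_measurable (M w)"
  by (simp add: measurable_section_def)

lemma measurable_section_max:
  assumes "measurable_section Om M L f" "measurable_section Om M L g"
  shows "measurable_section Om M L (\<lambda>w x. max (f w x) (g w x))"
proof -
  obtain s where s: "\<And>k. step_section Om L (s k)" "AE w in Om. (\<lambda>k. rho (M w) (s k w) (f w)) \<longlonglongrightarrow> 0"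
    using assms(1) unfolding measurable_section_def by blast
  obtain t where t: "\<And>k. step_section Om L (t k)" "AE w in Om. (\<lambda>k. rho (M w) (t k w) (g w)) \<longlonglongrightarrow> 0"
    using assms(2) unfolding measurable_section_def by blast
  have "\<forall>k. \<exists>\<sigma>. step_section Om L \<sigma> \<and> (\<forall>w\<in>space Om. AE x in M w. \<sigma> w x = max (s k w x) (t k w x))"
    using s(1) t(1) step_section_max by blast
  then obtain \<sigma> where \<sigma>: "\<And>k. step_section Om L (\<sigma> k)"
    "\<And>k w. w \<in> space Om \<Longrightarrow> AE x in M w. \<sigma> k w x = max (s k w x) (t k w x)"
    by metis
  have borel: "f w \<in> borel_measurable (M w)" "g w \<in> borel_measurable (M w)"
    "s k w \<in> borel_measurable (M w)" "t k w \<in> borel_measurable (M w)"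
    "\<sigma> k w \<in> borel_measurable (M w)" for k w
    using assms s(1) t(1) \<sigma>(1) by (auto intro: measurable_section_borel step_section_borel)
  have "AE w in Om. (\<lambda>k. rho (M w) (\<sigma> k w) (\<lambda>x. max (f w x) (g w x))) \<longlonglongrightarrow> 0"
    using s(2) t(2) AE_space
  proof eventually_elim
    case (elim w)
    have le: "rho (M w) (\<sigma> k w) (\<lambda>x. max (f w x) (g w x))
        \<le> rho (M w) (s k w) (f w) + rho (M w) (t k w) (g w)" for k
    proof -
      have "rho (M w) (\<sigma> k w) (\<lambda>x. max (f w x) (g w x))
          = rho (M w) (\<lambda>x. max (s k w x) (t k w x)) (\<lambda>x. max (f w x) (g w x))"
        using \<sigma>(2)[OF elim(3)] borel by (intro rho_cong_AE) auto
      also have "\<dots> \<le> rho (M w) (s k w) (f w) + rho (M w) (t k w) (g w)"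
        using borel by (intro finite_measure.rho_max_le[OF finite_measure_fibre])
      finally show ?thesis .
    qed
    show ?case
      using le tendsto_add_zero[OF elim(1,2)] by (rule tendsto_rho_0_by_bound)
  qed
  moreover have "(\<lambda>x. max (f w x) (g w x)) \<in> borel_measurable (M w)" for w
    using borel by (intro borel_measurable_max)
  ultimately show ?thesis
    unfolding measurable_section_def using \<sigma>(1) by blast
qed

lemma measurable_section_running_max:
  fixes f :: "nat \<Rightarrow> 'w \<Rightarrow> 'x \<Rightarrow> real"
  assumes "\<And>n. measurable_section Om M L (f n)"
  shows "measurable_section Om M L (\<lambda>w x. Max ((\<lambda>n. f n w x) ` {..N}))"
proof (induction N)
  case 0
  then show ?case
    using assms by simp
next
  case (Suc N)
  have "{..Suc N} = insert (Suc N) {..N}"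
    by auto
  then show ?case
    using measurable_section_max[OF assms Suc] by (simp add: max.commute)
qed

text \<open>The distance from a step section to a measurable section \<open>h\<close> is measurable in \<open>w\<close>
  only up to a null set; the measurable version is a limit of distances between step sections.\<close>

lemma rho_step_section_AE_eq_lim:
  assumes s: "\<And>k. step_section Om L (s k)" and t: "step_section Om L t"
    and h: "\<And>w. h w \<in> borel_measurable (M w)"
    and lim: "AE w in Om. (\<lambda>k. rho (M w) (s k w) (h w)) \<longlonglongrightarrow> 0"
  shows "(\<lambda>w. lim (\<lambda>k. rho (M w) (t w) (s k w))) \<in> borel_measurable Om"
    and "AE w in Om. lim (\<lambda>k. rho (M w) (t w) (s k w)) = rho (M w) (t w) (h w)"
proof -
  show "(\<lambda>w. lim (\<lambda>k. rho (M w) (t w) (s k w))) \<in> borel_measurable Om"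
    using s t by (intro borel_measurable_lim_metric measurable_rho_step_sections)
  show "AE w in Om. lim (\<lambda>k. rho (M w) (t w) (s k w)) = rho (M w) (t w) (h w)"
    using lim
  proof eventually_elim
    case (elim w)
    then show ?case
      using s t h step_section_borel
      by (intro limI finite_measure.tendsto_rho_right[OF finite_measure_fibre]) auto
  qed
qed

lemma measurable_section_AE_limit:
  assumes h: "\<And>m. measurable_section Om M L (h m)"
    and g: "\<And>w. g w \<in> borel_measurable (M w)"
    and lim: "AE w in Om. (\<lambda>m. rho (M w) (h m w) (g w)) \<longlonglongrightarrow> 0"
  shows "measurable_section Om M L g"
proof -
  have "\<forall>m. \<exists>s. (\<forall>k. step_section Om L (s k)) \<and> (AE w in Om. (\<lambda>k. rho (M w) (s k w) (h m w)) \<longlonglongrightarrow> 0)"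
    using h unfolding measurable_section_def by blast
  then obtain s where "\<forall>m. (\<forall>k. step_section Om L (s m k))
      \<and> (AE w in Om. (\<lambda>k. rho (M w) (s m k w) (h m w)) \<longlonglongrightarrow> 0)"
    by (auto dest!: choice)
  then have s: "\<And>m k. step_section Om L (s m k)"
    "\<And>m. AE w in Om. (\<lambda>k. rho (M w) (s m k w) (h m w)) \<longlonglongrightarrow> 0"
    by auto
  have borel: "h m w \<in> borel_measurable (M w)" "s m k w \<in> borel_measurable (M w)" for m k w
    using h s(1) by (auto intro: measurable_section_borel step_section_borel)
  define D where "D m k w = lim (\<lambda>k'. rho (M w) (s m k w) (s m k' w))" for m k w
  have D_meas: "D m k \<in> borel_measurable Om" for m k
    unfolding D_def by (rule rho_step_section_AE_eq_lim(1)[OF s(1) s(1) borel(1) s(2)])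
  have "AE w in Om. D m k w = rho (M w) (s m k w) (h m w)" for m k
    unfolding D_def by (rule rho_step_section_AE_eq_lim(2)[OF s(1) s(1) borel(1) s(2)])
  then have D_eq: "AE w in Om. \<forall>m k. D m k w = rho (M w) (s m k w) (h m w)"
    by (simp add: AE_all_countable)
  have D_lim: "AE w in Om. (\<lambda>k. D m k w) \<longlonglongrightarrow> 0" for m
    using D_eq s(2)[of m] by eventually_elim simp
  obtain \<kappa> where \<kappa>: "AE w in Om. (\<lambda>m. D m (\<kappa> m) w) \<longlonglongrightarrow> 0"
    using finite_measure.AE_tendsto_diagonal[where E=D, OF finite_measure_Om D_meas D_lim] by blast
  have "AE w in Om. (\<lambda>m. rho (M w) (s m (\<kappa> m) w) (g w)) \<longlonglongrightarrow> 0"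
    using \<kappa> D_eq lim
  proof eventually_elim
    case (elim w)
    have le: "rho (M w) (s m (\<kappa> m) w) (g w) \<le> D m (\<kappa> m) w + rho (M w) (h m w) (g w)" for m
      using elim(2) finite_measure.rho_triangle[OF finite_measure_fibre borel(2) borel(1) g] by simp
    show ?case
      using le tendsto_add_zero[OF elim(1,3)] by (rule tendsto_rho_0_by_bound)
  qed
  then show ?thesis
    unfolding measurable_section_def using g s(1) by (blast intro: exI[of _ "\<lambda>m. s m (\<kappa> m)"])
qed

lemma measurable_section_sup_seq:
  assumes f: "\<And>n. measurable_section Om M L (f n)"
    and bdd: "AE w in Om. AE x in M w. bdd_above (range (\<lambda>n. f n w x))"
  shows "measurable_section Om M L (\<lambda>w x. sup_seq (\<lambda>n. f n w x))"
proof (rule measurable_section_AE_limit[OF measurable_section_running_max[OF f]])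
  show "(\<lambda>x. sup_seq (\<lambda>n. f n w x)) \<in> borel_measurable (M w)" for w
    using f by (intro borel_measurable_sup_seq measurable_section_borel)
  show "AE w in Om. (\<lambda>N. rho (M w) (\<lambda>x. Max ((\<lambda>n. f n w x) ` {..N})) (\<lambda>x. sup_seq (\<lambda>n. f n w x))) \<longlonglongrightarrow> 0"
    using bdd
  proof eventually_elim
    case (elim w)
    then have "AE x in M w. (\<lambda>N. Max ((\<lambda>n. f n w x) ` {..N})) \<longlonglongrightarrow> sup_seq (\<lambda>n. f n w x)"
      by eventually_elim (simp add: sup_seq_eq_SUP running_max_tendsto_SUP)
    then show ?case
      using f by (intro finite_measure.tendsto_rho_AE[OF finite_measure_fibre] borel_measurable_sup_seq
          borel_measurable_Max measurable_section_borel) auto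
  qed
qed

lemma sup_seq_is_lub:
  assumes f: "\<And>n. measurable_section Om M L (f n)"
    and bdd: "AE w in Om. AE x in M w. bdd_above (range (\<lambda>n. f n w x))"
  shows "is_lub_in (le_sec Om M) {h. measurable_section Om M L h} f (\<lambda>w x. sup_seq (\<lambda>n. f n w x))"
    and "AE w in Om. is_lub_in (le_fib (M w)) (borel_measurable (M w)) (\<lambda>n. f n w)
      (\<lambda>x. sup_seq (\<lambda>n. f n w x))"
proof -
  show fibres: "AE w in Om. is_lub_in (le_fib (M w)) (borel_measurable (M w)) (\<lambda>n. f n w)
      (\<lambda>x. sup_seq (\<lambda>n. f n w x))"
    using bdd
  proof eventually_elim
    case (elim w)
    then show ?case
      using f by (intro is_lub_in_le_fib_sup_seq measurable_section_borel)
  qed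
  show "is_lub_in (le_sec Om M) {h. measurable_section Om M L h} f (\<lambda>w x. sup_seq (\<lambda>n. f n w x))"
    using measurable_section_sup_seq[OF f bdd] fibres
    by (intro is_lub_in_le_sec_of_fibres) (auto simp: measurable_section_borel)
qed

end

theorem theorem3p1:
  fixes Om :: "'w measure" and M :: "'w \<Rightarrow> 'x measure" and L :: "('w \<Rightarrow> 'x set) set"
    and f :: "nat \<Rightarrow> 'w \<Rightarrow> 'x \<Rightarrow> real"
  assumes "measurable_bundle Om M L"
    and "\<forall>n. measurable_section Om M L (f n)"
  shows "((\<exists>g. is_lub_in (le_sec Om M) {h. measurable_section Om M L h} f g) \<longleftrightarrow>
           (AE w in Om. \<exists>g. is_lub_in (le_fib (M w)) (borel_measurable (M w)) (\<lambda>n. f n w) g))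
       \<and> (\<forall>g. is_lub_in (le_sec Om M) {h. measurable_section Om M L h} f g \<longrightarrow>
           (AE w in Om. is_lub_in (le_fib (M w)) (borel_measurable (M w)) (\<lambda>n. f n w) (g w)))"
proof -
  interpret boolean_bundle Om M L
    by unfold_locales fact
  let ?S = "{h. measurable_section Om M L h}"
  have f: "\<And>n. measurable_section Om M L (f n)"
    using assms(2) by blast
  have bdd_of_lub: "AE w in Om. AE x in M w. bdd_above (range (\<lambda>n. f n w x))"
    if "is_lub_in (le_sec Om M) ?S f G" for G
    using that by (intro AE_bdd_above_of_le_sec[where G=G]) (simp add: is_lub_in_def)
  show ?thesis
  proof (intro conjI iffI allI impI)
    assume "\<exists>G. is_lub_in (le_sec Om M) ?S f G"
    then obtain G where "is_lub_in (le_sec Om M) ?S f G"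
      by blast
    from sup_seq_is_lub(2)[OF f bdd_of_lub[OF this]]
    show "AE w in Om. \<exists>g. is_lub_in (le_fib (M w)) (borel_measurable (M w)) (\<lambda>n. f n w) g"
      by (rule eventually_mono) blast
  next
    assume "AE w in Om. \<exists>g. is_lub_in (le_fib (M w)) (borel_measurable (M w)) (\<lambda>n. f n w) g"
    from sup_seq_is_lub(1)[OF f AE_bdd_above_of_fibre_lubs[OF this]]
    show "\<exists>G. is_lub_in (le_sec Om M) ?S f G"
      by blast
  next
    fix G assume G: "is_lub_in (le_sec Om M) ?S f G"
    have "?S \<subseteq> {h. \<forall>w. h w \<in> borel_measurable (M w)}"
      by (auto simp: measurable_section_borel)
    from is_lub_in_le_sec_imp_fibres[OF this G sup_seq_is_lub[OF f bdd_of_lub[OF G]]]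
    show "AE w in Om. is_lub_in (le_fib (M w)) (borel_measurable (M w)) (\<lambda>n. f n w) (G w)" .
  qed
qed

end
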